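(* Let $q$ be a power of an odd prime, write $q-1=2^s r$ with $r$ odd, let $a\in\mathbb{F}_q^*$ with $a\neq\pm1$, and let $f(X)=X^{q+1}+aX^2$ on $\mathbb{F}_{q^2}$. Note $f(\mathbb{F}_q)\subseteq\mathbb{F}_q$ and $f|_{\mathbb{F}_q}(x)=(a+1)x^2$. Suppose $\chi_2(1-a^2)=1$. Then the union of the connected components of the functional graph of $f$ over $\mathbb{F}_{q^2}$ that contain elements of $\mathbb{F}_q$ is obtained from the functional graph $\mathscr{G}(f|_{\mathbb{F}_q})$ of $x\mapsto(a+1)x^2$ on $\mathbb{F}_q$ by attaching, to every vertex $\alpha\in\mathbb{F}_q$ with $\chi_2(\alpha(a-1))=-1$, two new vertices each having an edge directed to $\alpha$ (and these new vertices have no preimages). In particular, $0$ is a fixed point whose connected component is $\{0\}$ alone, and $\frac{1}{a+1}$ is a fixed point whose connected component consists, if $s=1$, of $\frac1{a+1}$ together with exactly three other vertices each directed to $\frac{1}{a+1}$ and each having no preimage, and, if $s\ge2$, is isomorphic to $(Cyc(1),\mathscr{T}(s+1))$.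
   Context: $\chi_2$ is the quadratic character of $\mathbb{F}_q$: $\chi_2(\alpha)=1$ if $\alpha$ is a nonzero square, $-1$ if $\alpha$ is a nonsquare, $0$ if $\alpha=0$. The functional graph of a map $g$ on a finite set $S$ is the directed graph with vertex set $S$ and edges $x\to g(x)$. $Cyc(1)$ is a vertex with a loop. $\mathscr{T}(1)$ is the tree with two vertices $P_1,P$ and the edge $P_1\to P$ (root $P$); for $m\ge1$, $\mathscr{T}(m+1)$ is obtained from $\mathscr{T}(m)$ by attaching two new vertices, each with an edge directed to it, to every vertex of the last (top) level of $\mathscr{T}(m)$. $(Cyc(1),\mathscr{T}(m))$ is the fixed vertex with a copy of $\mathscr{T}(m)$ whose root is that vertex. *)

theory Defs
  imports "HOL-Computational_Algebra.Primes"
begin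

definition chi2 :: "'a::field set \<Rightarrow> 'a \<Rightarrow> int" where
  "chi2 K \<alpha> = (if \<alpha> = 0 then 0 else if (\<exists>\<beta>\<in>K. \<beta>^2 = \<alpha>) then 1 else -1)"

definition fg_edges :: "('a \<Rightarrow> 'a) \<Rightarrow> ('a \<times> 'a) set" where
  "fg_edges g = {(x, g x) | x. True}"

definition fg_component :: "('a \<Rightarrow> 'a) \<Rightarrow> 'a \<Rightarrow> 'a set" where
  "fg_component g x = {y. (x, y) \<in> (fg_edges g \<union> (fg_edges g)\<inverse>)\<^sup>*}"

text \<open>Model of (Cyc(1), T(m)): the root is None (with a loop); Some [] is the vertex P_1;
  Some xs (length xs = k) lies at level k+1; each vertex Some xs with length xs < m-1
  has the two children Some (True # xs), Some (False # xs).\<close>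
definition cyc_tree_verts :: "nat \<Rightarrow> bool list option set" where
  "cyc_tree_verts m = insert None {Some xs | xs. length xs < m}"

fun cyc_tree_map :: "bool list option \<Rightarrow> bool list option" where
  "cyc_tree_map None = None"
| "cyc_tree_map (Some []) = None"
| "cyc_tree_map (Some (b # xs)) = Some xs"

definition fg_iso :: "('a \<Rightarrow> 'a) \<Rightarrow> 'a set \<Rightarrow> ('b \<Rightarrow> 'b) \<Rightarrow> 'b set \<Rightarrow> bool" where
  "fg_iso g A h B \<longleftrightarrow> (\<forall>x\<in>A. g x \<in> A) \<and> (\<forall>y\<in>B. h y \<in> B) \<and>
     (\<exists>\<phi>. bij_betw \<phi> A B \<and> (\<forall>x\<in>A. \<phi> (g x) = h (\<phi> x)))"

end

theory Submission
  imports Defs "HOL-Computational_Algebra.Polynomial" "HOL-Number_Theory.Residues"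
begin

(*
  Write F for the field with q^2 elements, F_q = {x. x^q = x}, and call x traceless if
  x ~= 0 and x^q = -x.  On F_q the map f is x |-> (a + 1) x^2, on traceless elements it is
  x |-> (a - 1) x^2, and both take values in F_q.  Conversely, if Frobenius fixes or negates
  f z, then z^q = c z for some c in F_q with c^2 = 1 (when f z is negated this is where the
  square root of 1 - a^2 in F_q is needed), so z lies in F_q or is traceless.  Hence F_q together
  with the traceless elements is closed under f and under preimages, and it is the union of
  the components meeting F_q.  Traceless elements have no preimage, and the traceless
  preimages of alpha in F_q are the square roots of alpha / (a - 1), which lie outside F_q
  exactly when alpha (a - 1) is a nonsquare in F_q.

  For the fixed point c = 1 / (a + 1): if -1 is a nonsquare in F_q (s = 1), its preimages are
  +-c and the two traceless square roots of c / (a - 1), and none of these three has a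
  preimage.  If s >= 2, pick d in F_q with (a - 1) d^2 = c.  Then y |-> c y on F_q and
  y |-> d y off F_q maps the 2^(s+1)-th roots of unity onto the component and turns squaring
  into f; and squaring on a cyclic group of order 2^(s+1) is the tree (Cyc(1), T(s+1)).
*)

section \<open>Finite fields\<close>

lemma finite_field_power_card_minus_one:
  fixes x :: "'a::{field,finite}"
  assumes "x \<noteq> 0"
  shows "x ^ (card (UNIV :: 'a set) - 1) = 1"
proof -
  let ?U = "UNIV - {0::'a}"
  have "bij_betw ((*) x) ?U ?U"
    using assms by (intro bij_betwI[where g = "\<lambda>y. y / x"]) auto
  hence "(\<Prod>y\<in>?U. x * y) = \<Prod>?U"
    by (rule prod.reindex_bij_betw)
  moreover have "(\<Prod>y\<in>?U. x * y) = x ^ card ?U * \<Prod>?U"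
    by (simp add: prod.distrib)
  moreover have "\<Prod>?U \<noteq> 0" and "card ?U = card (UNIV :: 'a set) - 1"
    by (simp_all add: card_Diff_subset)
  ultimately show ?thesis
    by simp
qed

lemma finite_field_power_card:
  fixes x :: "'a::{field,finite}"
  shows "x ^ card (UNIV :: 'a set) = x"
proof (cases "x = 0")
  case False
  have "card (UNIV :: 'a set) = Suc (card (UNIV :: 'a set) - 1)"
    by (simp add: Suc_diff_1 finite_UNIV_card_ge_0)
  also have "x ^ \<dots> = x"
    using finite_field_power_card_minus_one[OF False] by (simp only: power_Suc2) simp
  finally show ?thesis
    by simp
qed (simp add: finite_UNIV_card_ge_0)

lemma power_eq_roots_bound:
  fixes z :: "'a::field"
  assumes "k > 0"
  shows "finite {x. x ^ k = z}" and "card {x. x ^ k = z} \<le> k"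
proof -
  define P where "P = [:-z:] + Polynomial.monom 1 k"
  have "degree P = k"
    using assms by (simp add: P_def degree_add_eq_right degree_monom_eq)
  hence "P \<noteq> 0"
    using assms by auto
  moreover have "{x. x ^ k = z} = {x. poly P x = 0}"
    by (simp add: P_def poly_monom)
  ultimately show "finite {x. x ^ k = z}" and "card {x. x ^ k = z} \<le> k"
    using poly_roots_finite card_poly_roots_bound \<open>degree P = k\<close> by fastforce+
qed

text \<open>The fibres of \<open>x \<mapsto> x ^ k\<close> partition the units, have at most \<open>k\<close> elements each,
  and lie over the at most \<open>m = (card UNIV - 1) div k\<close> roots of \<open>w ^ m = 1\<close>; so every
  fibre over such a root has exactly \<open>k\<close> elements.\<close>
lemma finite_field_card_power_eq:
  fixes z :: "'a::{field,finite}"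
  assumes "k > 0" "k dvd card (UNIV :: 'a set) - 1" "z ^ ((card (UNIV :: 'a set) - 1) div k) = 1"
  shows "card {x. x ^ k = z} = k"
proof -
  let ?N = "card (UNIV :: 'a set)"
  define m where "m = (?N - 1) div k"
  define V where "V = {w::'a. w ^ m = 1}"
  define fibre where "fibre w = {x::'a. x ^ k = w}" for w
  have km: "k * m = ?N - 1"
    using assms(2) by (simp add: m_def)
  have "?N \<ge> 2"
    using card_mono[of UNIV "{0::'a, 1}"] by simp
  hence "m > 0"
    using km by (cases m) auto
  have fibre_le: "card (fibre w) \<le> k" for w
    using power_eq_roots_bound(2)[OF assms(1)] by (simp add: fibre_def)
  have units: "UNIV - {0} = (\<Union>w\<in>V. fibre w)"
  proof -
    have "(x ^ k) ^ m = 1" if "x \<noteq> 0" for x :: 'a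
      using finite_field_power_card_minus_one[OF that] km by (simp flip: power_mult)
    thus ?thesis
      using assms(1) \<open>m > 0\<close> by (auto simp: V_def fibre_def zero_power)
  qed
  have "?N - 1 = card (\<Union>w\<in>V. fibre w)"
    unfolding units[symmetric] by (simp add: card_Diff_subset)
  also have "\<dots> = (\<Sum>w\<in>V. card (fibre w))"
    by (rule card_UN_disjoint) (auto simp: fibre_def)
  finally have sum_fibres: "(\<Sum>w\<in>V. card (fibre w)) = k * m"
    using km by simp
  have "card (fibre z) = k"
  proof (rule ccontr)
    assume "card (fibre z) \<noteq> k"
    moreover have "z \<in> V"
      using assms(3) by (simp add: V_def m_def)
    ultimately have "(\<Sum>w\<in>V. card (fibre w)) < (\<Sum>w\<in>V. k)"
      using fibre_le by (intro sum_strict_mono_ex1) (auto simp: V_def le_less)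
    also have "\<dots> \<le> k * m"
      using power_eq_roots_bound(2)[OF \<open>m > 0\<close>, of "1::'a"] by (simp add: V_def)
    finally show False
      using sum_fibres by simp
  qed
  thus ?thesis
    by (simp add: fibre_def)
qed

lemma finite_field_primitive_two_power_root:
  assumes "2 ^ Suc m dvd card (UNIV :: 'a set) - 1"
  obtains \<zeta> :: "'a::{field,finite}" where "\<zeta> ^ 2 ^ Suc m = 1" "\<zeta> ^ 2 ^ m = -1"
proof -
  have "\<not> {x::'a. x ^ 2 ^ Suc m = 1} \<subseteq> {x. x ^ 2 ^ m = 1}"
  proof
    assume "{x::'a. x ^ 2 ^ Suc m = 1} \<subseteq> {x. x ^ 2 ^ m = 1}"
    hence "card {x::'a. x ^ 2 ^ Suc m = 1} \<le> card {x::'a. x ^ 2 ^ m = 1}"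
      by (intro card_mono) simp_all
    moreover have "card {x::'a. x ^ 2 ^ Suc m = 1} = 2 ^ Suc m"
      using assms by (intro finite_field_card_power_eq) auto
    moreover have "card {x::'a. x ^ 2 ^ m = 1} \<le> 2 ^ m"
      by (rule power_eq_roots_bound(2)) simp
    ultimately have "(2::nat) ^ Suc m \<le> 2 ^ m"
      by linarith
    thus False
      by simp
  qed
  then obtain \<zeta> :: 'a where \<zeta>: "\<zeta> ^ 2 ^ Suc m = 1" "\<zeta> ^ 2 ^ m \<noteq> 1"
    by blast
  have "(\<zeta> ^ 2 ^ m) ^ 2 = 1"
    using \<zeta>(1) by (simp add: mult.commute flip: power_mult)
  with \<zeta> that show thesis
    by (simp add: power2_eq_1_iff)
qed

lemma CHAR_finite_field:
  assumes "prime p" "card (UNIV :: 'a::{field,finite} set) = p ^ k" "k > 0"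
  shows "CHAR('a) = p"
proof -
  have "prime CHAR('a)"
    by (intro prime_CHAR_semidom finite_imp_CHAR_pos) simp
  moreover have "CHAR('a) dvd p ^ k"
    using CHAR_dvd_CARD[where 'a='a] assms(2) by simp
  ultimately show ?thesis
    using assms(1) by (metis prime_dvd_power primes_dvd_imp_eq)
qed

lemma power_eq_one_two_power_dvd:
  fixes \<zeta> :: "'a::field"
  assumes "\<zeta> ^ 2 ^ m = -1" "(-1::'a) \<noteq> 1" "\<zeta> ^ t = 1"
  shows "2 ^ Suc m dvd t"
proof (rule ccontr)
  assume "\<not> 2 ^ Suc m dvd t"
  hence "t \<noteq> 0"
    by (metis dvd_0_right)
  then obtain w where t: "t = 2 ^ multiplicity 2 t * w" "odd w"
    using multiplicity_decompose'[of t 2] by auto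
  have "multiplicity 2 t \<le> m"
    using \<open>\<not> 2 ^ Suc m dvd t\<close> multiplicity_dvd'[of "Suc m" 2 t] by linarith
  hence "2 ^ m * w = t * 2 ^ (m - multiplicity 2 t)"
    by (subst t(1)) (simp add: algebra_simps flip: power_add)
  hence "(\<zeta> ^ 2 ^ m) ^ w = (\<zeta> ^ t) ^ 2 ^ (m - multiplicity 2 t)"
    by (simp flip: power_mult)
  with assms t(2) show False
    by simp
qed

lemma power_mod_eq:
  fixes \<zeta> :: "'a::monoid_mult"
  assumes "\<zeta> ^ k = 1"
  shows "\<zeta> ^ (e mod k) = \<zeta> ^ e"
proof -
  have "\<zeta> ^ e = \<zeta> ^ (k * (e div k) + e mod k)"
    by simp
  also have "\<dots> = (\<zeta> ^ k) ^ (e div k) * \<zeta> ^ (e mod k)"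
    by (simp only: power_add power_mult)
  finally show ?thesis
    using assms by simp
qed

lemma bij_betw_power_two_power_root:
  fixes \<zeta> :: "'a::field"
  assumes "\<zeta> ^ 2 ^ Suc m = 1" "\<zeta> ^ 2 ^ m = -1" "(-1::'a) \<noteq> 1"
  shows "bij_betw (\<lambda>e. \<zeta> ^ e) {..<2 ^ Suc m} {y. y ^ 2 ^ Suc m = 1}"
proof -
  have "\<zeta> \<noteq> 0"
    using assms(1) by (auto simp: zero_power)
  have inj: "inj_on (\<lambda>e. \<zeta> ^ e) {..<2 ^ Suc m}"
  proof (rule linorder_inj_onI')
    fix e1 e2 :: nat
    assume "e1 \<in> {..<2 ^ Suc m}" "e2 \<in> {..<2 ^ Suc m}" "e1 < e2"
    show "\<zeta> ^ e1 \<noteq> \<zeta> ^ e2"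
    proof
      assume "\<zeta> ^ e1 = \<zeta> ^ e2"
      hence "\<zeta> ^ (e2 - e1) = 1"
        using \<open>\<zeta> \<noteq> 0\<close> \<open>e1 < e2\<close> by (simp add: power_diff)
      hence "2 ^ Suc m dvd e2 - e1"
        using assms(2,3) by (intro power_eq_one_two_power_dvd)
      with \<open>e1 < e2\<close> \<open>e2 \<in> {..<2 ^ Suc m}\<close> show False
        by (auto dest: dvd_imp_le)
    qed
  qed
  moreover have "(\<lambda>e. \<zeta> ^ e) ` {..<2 ^ Suc m} = {y. y ^ 2 ^ Suc m = 1}"
  proof (rule card_subset_eq)
    show "finite {y::'a. y ^ 2 ^ Suc m = 1}"
      by (rule power_eq_roots_bound(1)) simp
    show "(\<lambda>e. \<zeta> ^ e) ` {..<2 ^ Suc m} \<subseteq> {y. y ^ 2 ^ Suc m = 1}"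
      using assms(1) by clarsimp (metis mult.commute power_mult power_one)
    have "card ((\<lambda>e. \<zeta> ^ e) ` {..<2 ^ Suc m}) = 2 ^ Suc m"
      using card_image[OF inj] by simp
    thus "card ((\<lambda>e. \<zeta> ^ e) ` {..<2 ^ Suc m}) = card {y::'a. y ^ 2 ^ Suc m = 1}"
      using power_eq_roots_bound(2)[of "2 ^ Suc m" "1::'a"] zero_less_power[of "2::nat" "Suc m"]
        card_mono[OF \<open>finite _\<close> \<open>_ \<subseteq> _\<close>]
      by linarith
  qed
  ultimately show ?thesis
    by (simp add: bij_betw_def)
qed

section \<open>Functional graphs and the tree \<open>(Cyc(1), T(m))\<close>\<close>

lemma fg_component_subset:
  assumes "x \<in> B" "g ` B \<subseteq> B" "g -` B \<subseteq> B"
  shows "fg_component g x \<subseteq> B"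
proof
  fix y
  assume "y \<in> fg_component g x"
  hence "(x, y) \<in> (fg_edges g \<union> (fg_edges g)\<inverse>)\<^sup>*"
    by (simp add: fg_component_def)
  thus "y \<in> B"
    by (induction rule: rtrancl_induct) (use assms in \<open>auto simp: fg_edges_def\<close>)
qed

lemma funpow_mem_fg_component:
  assumes "(g ^^ k) y = x"
  shows "y \<in> fg_component g x"
proof -
  let ?S = "fg_edges g \<union> (fg_edges g)\<inverse>"
  have "(y, (g ^^ k) y) \<in> ?S\<^sup>*" for y
  proof (induction k arbitrary: y)
    case (Suc k)
    have "(y, (g ^^ k) (g y)) \<in> ?S\<^sup>*"
      by (rule converse_rtrancl_into_rtrancl[OF _ Suc.IH]) (auto simp: fg_edges_def)
    thus ?case
      by (simp only: funpow_Suc_right comp_def)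
  qed simp
  hence "(x, y) \<in> (?S\<inverse>)\<^sup>*"
    using assms by (metis rtrancl_converseI)
  moreover have "?S\<inverse> = ?S"
    by auto
  ultimately show ?thesis
    by (simp add: fg_component_def)
qed

lemma fg_component_eqI:
  assumes "x \<in> B" "g ` B \<subseteq> B" "g -` B \<subseteq> B" "\<And>y. y \<in> B \<Longrightarrow> \<exists>k. (g ^^ k) y = x"
  shows "fg_component g x = B"
proof
  show "fg_component g x \<subseteq> B"
    using assms(1-3) by (rule fg_component_subset)
  show "B \<subseteq> fg_component g x"
  proof
    fix y
    assume "y \<in> B"
    then obtain k where "(g ^^ k) y = x"
      using assms(4) by blast
    thus "y \<in> fg_component g x"
      by (rule funpow_mem_fg_component)
  qed
qed

lemma fg_isoI:
  assumes "bij_betw \<psi> B A" "h ` B \<subseteq> B" "\<And>v. v \<in> B \<Longrightarrow> \<psi> (h v) = g (\<psi> v)"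
  shows "fg_iso g A h B"
  unfolding fg_iso_def
proof (intro conjI exI ballI)
  have inj: "inj_on \<psi> B" and A: "A = \<psi> ` B"
    using assms(1) by (auto simp: bij_betw_def)
  show "bij_betw (inv_into B \<psi>) A B"
    using assms(1) by (rule bij_betw_inv_into)
  fix x
  assume "x \<in> A"
  then obtain v where v: "v \<in> B" "x = \<psi> v"
    using A by blast
  hence "h v \<in> B" and gx: "g x = \<psi> (h v)"
    using assms(2,3) by auto
  thus "g x \<in> A"
    using A by blast
  show "inv_into B \<psi> (g x) = h (inv_into B \<psi> x)"
    using v gx \<open>h v \<in> B\<close> inj by (simp add: inv_into_f_f)
next
  show "\<And>y. y \<in> B \<Longrightarrow> h y \<in> B"
    using assms(2) by blast
qed

lemma horner_sum_bits_inj: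
  assumes "length bs = length cs" "horner_sum of_bool (2::nat) bs = horner_sum of_bool 2 cs"
  shows "bs = cs"
  using assms
proof (induction bs arbitrary: cs)
  case (Cons b bs)
  then obtain c cs' where "cs = c # cs'"
    by (cases cs) auto
  with Cons.prems have "of_bool b + 2 * horner_sum of_bool 2 bs
      = of_bool c + 2 * (horner_sum of_bool 2 cs' :: nat)"
    by simp
  hence "b = c" and "horner_sum of_bool 2 bs = (horner_sum of_bool 2 cs' :: nat)"
    by (cases b; cases c; simp; presburger)+
  moreover have "length bs = length cs'"
    using Cons.prems \<open>cs = c # cs'\<close> by simp
  ultimately show ?case
    using Cons.IH[of cs'] \<open>cs = c # cs'\<close> by blast
qed simp

lemma two_power_times_odd_inj:
  assumes "2 ^ i * (2 * x + 1) = 2 ^ j * (2 * y + (1::nat))"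
  shows "i = j" "x = y"
proof -
  have "multiplicity 2 (2 ^ i * (2 * x + 1)) = i" "multiplicity 2 (2 ^ j * (2 * y + 1)) = j"
    by (rule multiplicity_decomposeI[OF refl]; simp)+
  thus "i = j"
    using assms by simp
  thus "x = y"
    using assms by simp
qed

text \<open>Read residues mod \<open>2 ^ m\<close> as \<open>m\<close>-bit words from the top bit down: the vertex \<open>Some xs\<close>
  becomes the word \<open>xs\<close>, then a single one, then zeros, and the root \<open>None\<close> becomes zero.
  Doubling mod \<open>2 ^ m\<close> shifts out the top bit, which is the head of \<open>xs\<close>.\<close>
fun tree_index :: "nat \<Rightarrow> bool list option \<Rightarrow> nat" where
  "tree_index m None = 0"
| "tree_index m (Some xs) = 2 ^ (m - 1 - length xs) * (2 * horner_sum of_bool 2 (rev xs) + 1)"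

lemma cyc_tree_map_closed: "cyc_tree_map ` cyc_tree_verts m \<subseteq> cyc_tree_verts m"
proof
  fix w
  assume "w \<in> cyc_tree_map ` cyc_tree_verts m"
  then obtain v where "v \<in> cyc_tree_verts m" "w = cyc_tree_map v"
    by blast
  thus "w \<in> cyc_tree_verts m"
    by (cases v rule: cyc_tree_map.cases) (auto simp: cyc_tree_verts_def)
qed

lemma tree_index_less:
  assumes "v \<in> cyc_tree_verts m"
  shows "tree_index m v < 2 ^ m"
proof (cases v)
  case (Some xs)
  with assms have "length xs < m"
    by (simp add: cyc_tree_verts_def)
  have "2 * horner_sum of_bool 2 (rev xs) + 1 < (2::nat) ^ Suc (length xs)"
    using horner_sum_bound[of "rev xs", where 'a = nat] by simp
  hence "2 ^ (m - 1 - length xs) * (2 * horner_sum of_bool 2 (rev xs) + 1)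
      < (2::nat) ^ (m - 1 - length xs) * 2 ^ Suc (length xs)"
    by (rule mult_strict_left_mono) simp
  hence "tree_index m v < 2 ^ (m - 1 - length xs) * 2 ^ Suc (length xs)"
    using Some by (simp only: tree_index.simps)
  also have "\<dots> = 2 ^ m"
    using \<open>length xs < m\<close> by (simp flip: power_add power_Suc)
  finally show ?thesis .
qed simp

lemma inj_on_tree_index: "inj_on (tree_index m) (cyc_tree_verts m)"
proof
  fix v w
  assume v: "v \<in> cyc_tree_verts m" and w: "w \<in> cyc_tree_verts m"
    and eq: "tree_index m v = tree_index m w"
  show "v = w"
  proof (cases v; cases w)
    fix xs ys
    assume xs: "v = Some xs" and ys: "w = Some ys"
    with eq have "2 ^ (m - 1 - length xs) * (2 * horner_sum of_bool 2 (rev xs) + 1)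
      = (2::nat) ^ (m - 1 - length ys) * (2 * horner_sum of_bool 2 (rev ys) + 1)"
      by (simp only: tree_index.simps)
    hence "m - 1 - length xs = m - 1 - length ys"
      and "horner_sum of_bool 2 (rev xs) = (horner_sum of_bool 2 (rev ys) :: nat)"
      by (rule two_power_times_odd_inj)+
    moreover have "length xs < m" "length ys < m"
      using v w xs ys by (simp_all add: cyc_tree_verts_def)
    ultimately show "v = w"
      using xs ys horner_sum_bits_inj[of "rev xs" "rev ys"] by simp
  qed (use eq in simp_all)
qed

lemma tree_index_cyc_tree_map:
  assumes "v \<in> cyc_tree_verts m"
  shows "tree_index m (cyc_tree_map v) = 2 * tree_index m v mod 2 ^ m"
proof (cases v rule: cyc_tree_map.cases)
  case 2
  with assms show ?thesis
    by (simp add: cyc_tree_verts_def flip: power_Suc)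
next
  case (3 b xs)
  with assms obtain j where m: "m = Suc (Suc (length xs + j))"
    by (auto simp: cyc_tree_verts_def dest!: less_imp_Suc_add)
  have "2 * tree_index m v = tree_index m (cyc_tree_map v) + of_bool b * 2 ^ m"
    by (simp add: 3 m horner_sum_append power_add algebra_simps)
  moreover have "tree_index m (cyc_tree_map v) < 2 ^ m"
    using 3 m by (intro tree_index_less) (simp add: cyc_tree_verts_def)
  ultimately show ?thesis
    by simp
qed simp

lemma card_cyc_tree_verts: "card (cyc_tree_verts m) = 2 ^ m"
proof (induction m)
  case 0
  show ?case
    by (simp add: cyc_tree_verts_def)
next
  case (Suc m)
  have "cyc_tree_verts (Suc m) = cyc_tree_verts m \<union> Some ` {xs. length xs = m}"
    by (auto simp: cyc_tree_verts_def less_Suc_eq)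
  moreover have "card (Some ` {xs :: bool list. length xs = m}) = 2 ^ m"
    using card_lists_length_eq[of "UNIV :: bool set" m] by (simp add: card_image)
  moreover have "finite (cyc_tree_verts m)"
    using Suc.IH card_ge_0_finite by force
  moreover have "finite (Some ` {xs :: bool list. length xs = m})"
    using finite_lists_length_eq[of "UNIV :: bool set" m] by simp
  moreover have "cyc_tree_verts m \<inter> Some ` {xs. length xs = m} = {}"
    by (auto simp: cyc_tree_verts_def)
  ultimately show ?case
    using Suc.IH by (simp add: card_Un_disjoint)
qed

lemma bij_betw_tree_index: "bij_betw (tree_index m) (cyc_tree_verts m) {..<2 ^ m}"
proof -
  have "tree_index m ` cyc_tree_verts m \<subseteq> {..<2 ^ m}"
    using tree_index_less by blast
  moreover have "card (tree_index m ` cyc_tree_verts m) = card {..<(2::nat) ^ m}"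
    using inj_on_tree_index card_cyc_tree_verts by (simp add: card_image)
  ultimately have "tree_index m ` cyc_tree_verts m = {..<2 ^ m}"
    by (intro card_subset_eq) simp_all
  thus ?thesis
    using inj_on_tree_index by (simp add: bij_betw_def)
qed

section \<open>The field with \<open>q\<^sup>2\<close> elements over \<open>F\<^sub>q\<close>\<close>

locale odd_quadratic_extension =
  fixes p n q :: nat and Fq :: "'a::{field,finite} set"
  assumes prime_p: "prime p" and odd_p: "odd p" and n_pos: "n \<ge> 1" and q_eq: "q = p ^ n"
    and card_UNIV: "card (UNIV :: 'a set) = q ^ 2"
    and Fq_eq: "Fq = {x. x ^ q = x}"
begin

lemma CHAR_eq: "CHAR('a) = p"
  using CHAR_finite_field[OF prime_p, where k = "n * 2"] card_UNIV n_pos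
  by (simp add: q_eq power_mult)

lemma two_neq_zero: "(2::'a) \<noteq> 0"
proof
  assume "(2::'a) = 0"
  hence "p dvd 2"
    using of_nat_eq_0_iff_char_dvd[of 2, where 'a = 'a] by (simp add: CHAR_eq)
  with prime_p odd_p show False
    using primes_dvd_imp_eq[OF prime_p two_is_prime_nat] by simp
qed

lemma minus_one_neq_one: "(-1::'a) \<noteq> 1"
  using two_neq_zero by (metis add_eq_0_iff one_add_one)

lemma neq_uminus: "(x::'a) \<noteq> 0 \<Longrightarrow> x \<noteq> - x"
  using two_neq_zero by (auto simp flip: mult_2 eq_neg_iff_add_eq_0)

lemma odd_q: "odd q"
  using odd_p by (simp add: q_eq)

lemma q_gt_one: "q > 1"
  using one_less_power[OF prime_gt_1_nat[OF prime_p], of n] n_pos by (simp add: q_eq)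

lemma frob_add: "(x + y :: 'a) ^ q = x ^ q + y ^ q"
  by (rule freshmans_dream') (auto simp: CHAR_eq prime_p q_eq)

lemma frob_frob: "((x::'a) ^ q) ^ q = x"
  using finite_field_power_card[of x] by (simp add: card_UNIV power2_eq_square flip: power_mult)

lemma frob_uminus: "(- x :: 'a) ^ q = - (x ^ q)"
  using odd_q by simp

lemma frob_square: "((x::'a) ^ 2) ^ q = (x ^ q) ^ 2"
  by (simp flip: power_mult add: mult.commute)

lemma mem_Fq: "x \<in> Fq \<longleftrightarrow> x ^ q = x"
  by (simp add: Fq_eq)

lemma Fq_one [simp]: "1 \<in> Fq"
  by (simp add: mem_Fq)

lemma Fq_add [intro]: "x \<in> Fq \<Longrightarrow> y \<in> Fq \<Longrightarrow> x + y \<in> Fq"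
  by (simp add: mem_Fq frob_add)

lemma Fq_uminus [intro]: "x \<in> Fq \<Longrightarrow> - x \<in> Fq"
  by (simp add: mem_Fq frob_uminus)

lemma Fq_diff [intro]: "x \<in> Fq \<Longrightarrow> y \<in> Fq \<Longrightarrow> x - y \<in> Fq"
  using Fq_add[of x "- y"] Fq_uminus[of y] by simp

lemma Fq_mult [intro]: "x \<in> Fq \<Longrightarrow> y \<in> Fq \<Longrightarrow> x * y \<in> Fq"
  by (simp add: mem_Fq power_mult_distrib)

lemma Fq_divide [intro]: "x \<in> Fq \<Longrightarrow> y \<in> Fq \<Longrightarrow> x / y \<in> Fq"
  by (simp add: mem_Fq power_divide)

lemma Fq_power [intro]: "x \<in> Fq \<Longrightarrow> x ^ k \<in> Fq"
  by (simp add: mem_Fq flip: power_mult) (metis mult.commute power_mult)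

lemma pow_q_eq: "(x::'a) ^ q = x ^ (q - 1) * x"
  using q_gt_one by (simp flip: power_Suc2)

lemma Fq_iff_pow_q_minus_one: "x \<noteq> 0 \<Longrightarrow> x \<in> Fq \<longleftrightarrow> x ^ (q - 1) = 1"
  by (simp add: mem_Fq pow_q_eq)

definition traceless :: "'a set" where
  "traceless = {x. x \<noteq> 0 \<and> x ^ q = - x}"

lemma traceless_not_Fq: "x \<in> traceless \<Longrightarrow> x \<notin> Fq"
  using two_neq_zero by (auto simp: traceless_def mem_Fq simp flip: mult_2 eq_neg_iff_add_eq_0)

lemma traceless_uminus: "x \<in> traceless \<Longrightarrow> - x \<in> traceless"
  by (simp add: traceless_def frob_uminus)

lemma traceless_mult_Fq: "c \<in> Fq \<Longrightarrow> c \<noteq> 0 \<Longrightarrow> x \<in> traceless \<Longrightarrow> c * x \<in> traceless"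
  by (simp add: traceless_def mem_Fq power_mult_distrib)

lemma square_traceless: "x ^ q = - x \<Longrightarrow> x ^ 2 \<in> Fq"
  by (simp add: mem_Fq frob_square)

lemma square_in_Fq: "x ^ 2 \<in> Fq \<Longrightarrow> x \<in> Fq \<or> x \<in> traceless"
  by (cases "x = 0") (auto simp: mem_Fq traceless_def frob_square power2_eq_iff)

lemma frob_eq_scalar:
  assumes "z ^ q = c * z" "c \<in> Fq"
  shows "z = 0 \<or> c ^ 2 = 1"
proof -
  have "z = (c * z) ^ q"
    using frob_frob[of z] assms(1) by simp
  also have "\<dots> = c ^ 2 * z"
    using assms by (simp add: mem_Fq power_mult_distrib power2_eq_square)
  finally show ?thesis
    by (metis mult_cancel_right1)
qed

lemma Fq_has_sqrt:
  assumes "\<beta> \<in> Fq"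
  obtains x where "x ^ 2 = \<beta>"
proof (cases "\<beta> = 0")
  case False
  obtain k where q: "q = 2 * k + 1"
    using odd_q by (rule oddE)
  have N: "card (UNIV :: 'a set) - 1 = 2 * ((q - 1) * (k + 1))"
    by (simp add: card_UNIV q power2_eq_square algebra_simps)
  hence "(card (UNIV :: 'a set) - 1) div 2 = (q - 1) * (k + 1)"
    by simp
  hence "\<beta> ^ ((card (UNIV :: 'a set) - 1) div 2) = (\<beta> ^ (q - 1)) ^ (k + 1)"
    by (simp only: power_mult)
  with N have "card {x. x ^ 2 = \<beta>} = 2"
    using assms False by (intro finite_field_card_power_eq) (simp_all add: Fq_iff_pow_q_minus_one)
  hence "{x. x ^ 2 = \<beta>} \<noteq> {}"
    by (metis card.empty zero_neq_numeral)
  thus thesis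
    using that by blast
qed (use that in simp)

lemma chi2_traceless_square:
  assumes "t \<in> traceless"
  shows "chi2 Fq (t ^ 2) = -1"
proof -
  have "\<not> (\<exists>\<gamma>\<in>Fq. \<gamma> ^ 2 = t ^ 2)"
    using assms traceless_not_Fq by (metis Fq_uminus minus_minus power2_eq_iff)
  with assms show ?thesis
    by (simp add: chi2_def traceless_def)
qed

lemma nonsquare_sqrts:
  assumes "\<beta> \<in> Fq" "chi2 Fq \<beta> = -1"
  obtains t where "t \<in> traceless" "{x. x ^ 2 = \<beta>} = {t, - t}"
proof -
  obtain t where t: "t ^ 2 = \<beta>"
    using Fq_has_sqrt[OF assms(1)] .
  have "t \<notin> Fq"
    using assms(2) t by (force simp: chi2_def split: if_splits)
  hence "t \<in> traceless"
    using square_in_Fq assms(1) t by blast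
  moreover have "{x. x ^ 2 = \<beta>} = {t, - t}"
    using t by (auto simp: power2_eq_iff)
  ultimately show thesis
    by (rule that)
qed

lemma card_traceless_sqrt:
  assumes "\<beta> \<in> Fq"
  shows "card {x \<in> traceless. x ^ 2 = \<beta>} = (if chi2 Fq \<beta> = -1 then 2 else 0)"
proof (cases "chi2 Fq \<beta> = -1")
  case True
  then obtain t where t: "t \<in> traceless" "{x. x ^ 2 = \<beta>} = {t, - t}"
    using nonsquare_sqrts assms by blast
  hence "{x \<in> traceless. x ^ 2 = \<beta>} = {t, - t}"
    using traceless_uminus by blast
  moreover have "t \<noteq> - t"
    using t(1) by (intro neq_uminus) (simp add: traceless_def)
  ultimately show ?thesis
    using True by simp
next
  case False
  hence "{x \<in> traceless. x ^ 2 = \<beta>} = {}"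
    using chi2_traceless_square by blast
  with False show ?thesis
    by simp
qed

lemma chi2_mult_square:
  assumes "c \<in> Fq" "c \<noteq> 0"
  shows "chi2 Fq (c ^ 2 * \<beta>) = chi2 Fq \<beta>"
proof -
  have "(\<exists>\<gamma>\<in>Fq. \<gamma> ^ 2 = c ^ 2 * \<beta>) \<longleftrightarrow> (\<exists>\<gamma>\<in>Fq. \<gamma> ^ 2 = \<beta>)"
  proof
    assume "\<exists>\<gamma>\<in>Fq. \<gamma> ^ 2 = c ^ 2 * \<beta>"
    then obtain \<gamma> where "\<gamma> \<in> Fq" "\<gamma> ^ 2 = c ^ 2 * \<beta>"
      by blast
    with assms show "\<exists>\<gamma>\<in>Fq. \<gamma> ^ 2 = \<beta>"
      by (intro bexI[of _ "\<gamma> / c"]) (auto simp: power_divide)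
  next
    assume "\<exists>\<gamma>\<in>Fq. \<gamma> ^ 2 = \<beta>"
    then obtain \<gamma> where "\<gamma> \<in> Fq" "\<gamma> ^ 2 = \<beta>"
      by blast
    with assms show "\<exists>\<gamma>\<in>Fq. \<gamma> ^ 2 = c ^ 2 * \<beta>"
      by (intro bexI[of _ "c * \<gamma>"]) (auto simp: power_mult_distrib)
  qed
  with assms show ?thesis
    by (simp add: chi2_def)
qed

lemma minus_one_square_Fq_iff: "(\<exists>i\<in>Fq. i ^ 2 = -1) \<longleftrightarrow> 4 dvd q - 1"
proof -
  obtain k where k: "q - 1 = 2 * k"
    using odd_q q_gt_one by (metis dvd_def odd_two_times_div_two_nat One_nat_def)
  have pow: "i ^ (q - 1) = 1 \<longleftrightarrow> even k" if "i ^ 2 = -1" for i :: 'a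
    using that minus_one_neq_one unfolding k power_mult by (simp add: minus_one_power_iff)
  obtain i :: 'a where i: "i ^ 2 = -1"
    using Fq_has_sqrt[OF Fq_uminus[OF Fq_one]] by blast
  hence "i \<noteq> 0"
    by auto
  have "(\<exists>j\<in>Fq. j ^ 2 = -1) \<longleftrightarrow> i \<in> Fq"
    using i Fq_uminus by (metis minus_minus power2_eq_iff)
  also have "\<dots> \<longleftrightarrow> even k"
    using pow[OF i] Fq_iff_pow_q_minus_one[OF \<open>i \<noteq> 0\<close>] by simp
  also have "\<dots> \<longleftrightarrow> 4 dvd q - 1"
    unfolding k by presburger
  finally show ?thesis .
qed

lemma frob_two_power_root:
  assumes "q - 1 = 2 ^ s * r" "odd r" "(y::'a) ^ 2 ^ Suc s = 1"
  shows "y ^ q = y ^ 2 ^ s * y"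
proof -
  have "(y ^ 2 ^ s) ^ 2 = y ^ 2 ^ Suc s"
    by (simp only: power_Suc2 power_mult[of y "2 ^ s" 2])
  hence "(y ^ 2 ^ s) ^ 2 = 1"
    using assms(3) by simp
  hence "(y ^ 2 ^ s) ^ r = y ^ 2 ^ s"
    using assms(2) by (auto simp: power2_eq_1_iff)
  hence "y ^ (q - 1) = y ^ 2 ^ s"
    by (simp only: assms(1) power_mult)
  thus ?thesis
    by (simp add: pow_q_eq)
qed

lemma primitive_two_power_root_exists:
  assumes "q - 1 = 2 ^ s * r"
  obtains \<zeta> :: 'a where "\<zeta> ^ 2 ^ Suc s = 1" "\<zeta> ^ 2 ^ s = -1"
proof (rule finite_field_primitive_two_power_root)
  have "card (UNIV :: 'a set) - 1 = (q - 1) * (q + 1)"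
    using q_gt_one by (simp add: card_UNIV power2_eq_square algebra_simps)
  moreover have "2 ^ s * 2 dvd (q - 1) * (q + 1)"
    using assms odd_q by (intro mult_dvd_mono) simp_all
  ultimately show "2 ^ Suc s dvd card (UNIV :: 'a set) - 1"
    by (simp add: mult.commute)
qed (use that in blast)

end

section \<open>The map \<open>f\<close>\<close>

locale norm_plus_square = odd_quadratic_extension p n q Fq
  for p n q :: nat and Fq :: "'a::{field,finite} set" +
  fixes a :: 'a and f :: "'a \<Rightarrow> 'a"
  assumes a_Fq: "a \<in> Fq" and a_nonzero: "a \<noteq> 0" and a_neq_one: "a \<noteq> 1"
    and a_neq_minus_one: "a \<noteq> -1"
    and f_eq: "f = (\<lambda>x. x ^ (q + 1) + a * x ^ 2)"
    and one_minus_a2_square: "chi2 Fq (1 - a ^ 2) = 1"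
begin

lemma a_plus_one_nonzero: "a + 1 \<noteq> 0"
  using a_neq_minus_one by (simp add: add_eq_0_iff2)

lemma a_minus_one_nonzero: "a - 1 \<noteq> 0"
  using a_neq_one by simp

lemma a_square_minus_one: "a ^ 2 - 1 = (a - 1) * (a + 1)"
  by (simp add: algebra_simps power2_eq_square)

lemma sqrt_one_minus_a2:
  obtains b where "b \<in> Fq" "b \<noteq> 0" "b ^ 2 = 1 - a ^ 2"
proof -
  obtain b where "b \<in> Fq" "b ^ 2 = 1 - a ^ 2"
    using one_minus_a2_square by (auto simp: chi2_def split: if_splits)
  moreover have "1 - a ^ 2 \<noteq> 0"
    using a_plus_one_nonzero a_minus_one_nonzero a_square_minus_one by auto
  ultimately show thesis
    using that by force
qed

lemma f_norm: "f z = z ^ q * z + a * z ^ 2"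
  by (simp add: f_eq power_Suc2)

lemma f_Fq: "x \<in> Fq \<Longrightarrow> f x = (a + 1) * x ^ 2"
  by (simp add: f_norm mem_Fq algebra_simps power2_eq_square)

lemma f_antifixed: "x ^ q = - x \<Longrightarrow> f x = (a - 1) * x ^ 2"
  by (simp add: f_norm algebra_simps power2_eq_square)

lemma f_in_Fq:
  assumes "x \<in> Fq \<or> x \<in> traceless"
  shows "f x \<in> Fq"
  using assms
proof
  assume "x \<in> Fq"
  with a_Fq show ?thesis
    by (auto simp: f_Fq intro!: Fq_mult Fq_add Fq_power)
next
  assume "x \<in> traceless"
  with a_Fq square_traceless show ?thesis
    by (auto simp: f_antifixed traceless_def intro!: Fq_mult Fq_diff)
qed

lemma frob_f: "(f z) ^ q = z * z ^ q + a * (z ^ q) ^ 2"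
  using a_Fq by (simp add: f_norm frob_add power_mult_distrib frob_frob frob_square mem_Fq)

text \<open>This is where \<open>1 - a\<^sup>2 = b\<^sup>2\<close> with \<open>b \<in> F\<^sub>q\<close> is used: completing the square,
  \<open>u = z ^ q\<close> satisfies \<open>(a u + z)\<^sup>2 = (b z)\<^sup>2\<close>.\<close>
lemma frob_scalar_if_frob_f_antifixed:
  assumes "(f z) ^ q = - f z"
  obtains c where "c \<in> Fq" "z ^ q = c * z"
proof -
  define u where "u = z ^ q"
  have quadratic: "a * u ^ 2 + 2 * u * z + a * z ^ 2 = 0"
    using assms by (subst (asm) frob_f) (simp add: f_norm u_def algebra_simps power2_eq_square)
  obtain b where b: "b \<in> Fq" "b ^ 2 = 1 - a ^ 2"
    using sqrt_one_minus_a2 by blast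
  have "(a * u + z) ^ 2 = a * (a * u ^ 2 + 2 * u * z + a * z ^ 2) + (1 - a ^ 2) * z ^ 2"
    by (simp add: algebra_simps power2_eq_square)
  also have "\<dots> = (b * z) ^ 2"
    using quadratic b by (simp add: power_mult_distrib)
  finally obtain b' where "b' \<in> Fq" "a * u + z = b' * z"
    using b(1) Fq_uminus[OF b(1)] by (auto simp: power2_eq_iff)
  moreover from this have "u = ((b' - 1) / a) * z"
    using a_nonzero by (simp add: field_simps)
  moreover have "(b' - 1) / a \<in> Fq"
    using \<open>b' \<in> Fq\<close> a_Fq by (intro Fq_divide Fq_diff) simp_all
  ultimately show thesis
    using that by (simp add: u_def)
qed

lemma Fq_or_traceless_if_frob_f_pm:
  assumes "(f z) ^ q = f z \<or> (f z) ^ q = - f z"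
  shows "z \<in> Fq \<or> z \<in> traceless"
proof -
  have "z ^ q = z \<or> z ^ q = - z"
    using assms
  proof
    assume "(f z) ^ q = f z"
    hence "a * (z ^ q) ^ 2 = a * z ^ 2"
      by (subst (asm) frob_f) (simp add: f_norm mult.commute)
    thus ?thesis
      using a_nonzero by (simp add: power2_eq_iff)
  next
    assume "(f z) ^ q = - f z"
    then obtain c where "c \<in> Fq" "z ^ q = c * z"
      by (rule frob_scalar_if_frob_f_antifixed)
    with frob_eq_scalar[of z c] show ?thesis
      by (auto simp: power2_eq_1_iff)
  qed
  thus ?thesis
    by (cases "z = 0") (auto simp: mem_Fq traceless_def)
qed

lemma f_preimage_Fq: "f z \<in> Fq \<Longrightarrow> z \<in> Fq \<or> z \<in> traceless"
  by (rule Fq_or_traceless_if_frob_f_pm) (simp add: mem_Fq)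

lemma f_neq_traceless: "x \<in> traceless \<Longrightarrow> f y \<noteq> x"
  using Fq_or_traceless_if_frob_f_pm[of y] f_in_Fq[of y] traceless_not_Fq
  by (auto simp: traceless_def)

lemma f_eq_zero_iff: "f z = 0 \<longleftrightarrow> z = 0"
proof
  assume "f z = 0"
  hence "z * (z ^ q + a * z) = 0"
    by (simp add: f_norm algebra_simps power2_eq_square)
  hence "z = 0 \<or> z ^ q = - a * z"
    by (auto simp: eq_neg_iff_add_eq_0)
  moreover have "(- a) ^ 2 \<noteq> 1"
    using a_plus_one_nonzero a_minus_one_nonzero a_square_minus_one by auto
  ultimately show "z = 0"
    using frob_eq_scalar[of z "- a"] a_Fq by auto
qed (simp add: f_eq)

lemma f_eq_Fq_iff:
  assumes "\<gamma> \<in> Fq" "\<gamma> \<noteq> 0"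
  shows "f y = \<gamma> \<longleftrightarrow> (y \<in> Fq \<and> (a + 1) * y ^ 2 = \<gamma>) \<or> (y \<in> traceless \<and> (a - 1) * y ^ 2 = \<gamma>)"
  using f_preimage_Fq[of y] f_Fq f_antifixed assms by (auto simp: traceless_def)

lemma union_fg_components_Fq: "(\<Union>\<alpha>\<in>Fq. fg_component f \<alpha>) = Fq \<union> traceless"
proof
  show "(\<Union>\<alpha>\<in>Fq. fg_component f \<alpha>) \<subseteq> Fq \<union> traceless"
    using f_in_Fq f_preimage_Fq f_neq_traceless by (intro UN_least fg_component_subset) blast+
  have "x \<in> fg_component f (f x)" for x
    by (rule funpow_mem_fg_component[where k = 1]) simp
  moreover have "x \<in> fg_component f x" for x
    by (rule funpow_mem_fg_component[where k = 0]) simp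
  ultimately show "Fq \<union> traceless \<subseteq> (\<Union>\<alpha>\<in>Fq. fg_component f \<alpha>)"
    using f_in_Fq by blast
qed

lemma chi2_f_traceless:
  assumes "x \<in> traceless"
  shows "chi2 Fq (f x * (a - 1)) = -1"
proof -
  have "f x * (a - 1) = ((a - 1) * x) ^ 2"
    using assms by (simp add: f_antifixed traceless_def power2_eq_square)
  moreover have "(a - 1) * x \<in> traceless"
    using assms a_Fq a_minus_one_nonzero by (intro traceless_mult_Fq) auto
  ultimately show ?thesis
    by (simp add: chi2_traceless_square)
qed

lemma card_traceless_f_preimage:
  assumes "\<alpha> \<in> Fq"
  shows "card {x \<in> traceless. f x = \<alpha>} = (if chi2 Fq (\<alpha> * (a - 1)) = -1 then 2 else 0)"
proof -
  have "{x \<in> traceless. f x = \<alpha>} = {x \<in> traceless. x ^ 2 = \<alpha> / (a - 1)}"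
    using a_minus_one_nonzero by (auto simp: traceless_def f_antifixed field_simps)
  moreover have "chi2 Fq ((a - 1) ^ 2 * (\<alpha> / (a - 1))) = chi2 Fq (\<alpha> / (a - 1))"
    using a_Fq a_minus_one_nonzero by (intro chi2_mult_square) auto
  hence "chi2 Fq (\<alpha> / (a - 1)) = chi2 Fq (\<alpha> * (a - 1))"
    using a_minus_one_nonzero by (simp add: power2_eq_square mult.commute)
  moreover have "\<alpha> / (a - 1) \<in> Fq"
    using assms a_Fq by (intro Fq_divide Fq_diff) simp_all
  ultimately show ?thesis
    using card_traceless_sqrt[of "\<alpha> / (a - 1)"] by simp
qed

lemma fg_component_zero: "fg_component f 0 = {0}"
  by (rule fg_component_eqI) (auto simp: f_eq_zero_iff intro: exI[of _ 0])

subsection \<open>The component of the fixed point \<open>1 / (a + 1)\<close>\<close>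

lemma fixed_point_Fq: "1 / (a + 1) \<in> Fq"
  using a_Fq by (intro Fq_divide Fq_add) simp_all

lemma f_fixed_point: "f (1 / (a + 1)) = 1 / (a + 1)"
  using fixed_point_Fq a_plus_one_nonzero by (simp add: f_Fq power2_eq_square)

lemma f_eq_fixed_point_Fq:
  assumes "y \<in> Fq"
  shows "f y = 1 / (a + 1) \<longleftrightarrow> y = 1 / (a + 1) \<or> y = - (1 / (a + 1))"
proof -
  let ?c = "1 / (a + 1)"
  have c: "(a + 1) * ?c = 1"
    using a_plus_one_nonzero by simp
  have "(a + 1) * y ^ 2 = ?c \<longleftrightarrow> y ^ 2 = ?c ^ 2"
  proof
    assume "(a + 1) * y ^ 2 = ?c"
    hence "?c * ((a + 1) * y ^ 2) = ?c ^ 2"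
      by (simp add: power2_eq_square)
    with c show "y ^ 2 = ?c ^ 2"
      by (simp add: mult.assoc[symmetric] mult.commute[of ?c])
  next
    assume "y ^ 2 = ?c ^ 2"
    with c show "(a + 1) * y ^ 2 = ?c"
      by (simp add: power2_eq_square mult.assoc[symmetric])
  qed
  with assms show ?thesis
    by (simp add: f_Fq power2_eq_iff)
qed

lemma fixed_point_quotient_eq:
  assumes "(a - 1) * \<beta> = 1 / (a + 1)"
  obtains b where "b \<in> Fq" "b \<noteq> 0" "\<beta> = (1 / b) ^ 2 * (-1)"
proof -
  obtain b where b: "b \<in> Fq" "b \<noteq> 0" "b ^ 2 = 1 - a ^ 2"
    by (rule sqrt_one_minus_a2)
  have "b ^ 2 * \<beta> = (1 - a ^ 2) * \<beta>"
    using b(3) by simp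
  also have "\<dots> = - ((a + 1) * ((a - 1) * \<beta>))"
    by (simp add: algebra_simps power2_eq_square)
  also have "\<dots> = -1"
    using assms a_plus_one_nonzero by simp
  finally have "\<beta> = (1 / b) ^ 2 * (-1)"
    using b(2) by (simp add: power_one_over field_simps)
  with b(1,2) that show thesis
    by blast
qed

lemma f_neq_minus_fixed_point:
  assumes "\<not> 4 dvd q - 1"
  shows "f y \<noteq> - (1 / (a + 1))"
proof
  assume fy: "f y = - (1 / (a + 1))"
  have "- (1 / (a + 1)) \<in> Fq" "- (1 / (a + 1)) \<noteq> 0"
    using fixed_point_Fq a_plus_one_nonzero by auto
  with fy consider "y \<in> Fq" "(a + 1) * y ^ 2 = - (1 / (a + 1))"
    | "y \<in> traceless" "(a - 1) * y ^ 2 = - (1 / (a + 1))"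
    using f_eq_Fq_iff by blast
  thus False
  proof cases
    case 1
    have "((a + 1) * y) ^ 2 = (a + 1) * ((a + 1) * y ^ 2)"
      by (simp add: power2_eq_square algebra_simps)
    also have "\<dots> = -1"
      using 1(2) a_plus_one_nonzero by simp
    finally have "((a + 1) * y) ^ 2 = -1" .
    moreover have "(a + 1) * y \<in> Fq"
      using 1 a_Fq by (intro Fq_mult Fq_add) simp_all
    ultimately show False
      using assms minus_one_square_Fq_iff by blast
  next
    case 2
    hence "(a - 1) * (- (y ^ 2)) = 1 / (a + 1)"
      by simp
    then obtain b where b: "b \<in> Fq" "- (y ^ 2) = (1 / b) ^ 2 * (-1)"
      by (rule fixed_point_quotient_eq)
    hence "y \<in> Fq"
      by (auto simp: power2_eq_iff intro!: Fq_uminus Fq_divide)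
    with 2(1) show False
      using traceless_not_Fq by blast
  qed
qed

lemma chi2_fixed_point_quotient:
  assumes "\<not> 4 dvd q - 1" "(a - 1) * \<beta> = 1 / (a + 1)"
  shows "chi2 Fq \<beta> = -1"
proof -
  obtain b where b: "b \<in> Fq" "b \<noteq> 0" "\<beta> = (1 / b) ^ 2 * (-1)"
    using assms(2) by (rule fixed_point_quotient_eq)
  have "chi2 Fq ((1 / b) ^ 2 * (-1)) = chi2 Fq (-1)"
    using b by (intro chi2_mult_square) auto
  moreover have "chi2 Fq (-1) = -1"
    using assms(1) minus_one_square_Fq_iff by (auto simp: chi2_def)
  ultimately show ?thesis
    using b(3) by simp
qed

text \<open>Here \<open>\<plusminus>t\<close> are the square roots of \<open>1 / (a + 1) / (a - 1)\<close>, a nonsquare in \<open>F\<^sub>q\<close>.\<close>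
lemma fixed_point_preimages:
  assumes "\<not> 4 dvd q - 1"
  obtains t where "t \<in> traceless"
    "\<And>y. f y = 1 / (a + 1) \<longleftrightarrow> y \<in> {1 / (a + 1), - (1 / (a + 1)), t, - t}"
proof -
  define c where "c = 1 / (a + 1)"
  define \<beta> where "\<beta> = c / (a - 1)"
  have c: "c \<in> Fq" "c \<noteq> 0"
    using fixed_point_Fq a_plus_one_nonzero by (auto simp: c_def)
  have \<beta>: "\<beta> \<in> Fq" "(a - 1) * \<beta> = c"
    using c a_Fq a_minus_one_nonzero by (auto simp: \<beta>_def intro!: Fq_divide Fq_diff)
  obtain t where t: "t \<in> traceless" "{x. x ^ 2 = \<beta>} = {t, - t}"
    using nonsquare_sqrts[OF \<beta>(1)] chi2_fixed_point_quotient[OF assms] \<beta>(2) by (auto simp: c_def)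
  have "f y = c \<longleftrightarrow> y \<in> {c, - c, t, - t}" for y
  proof (cases "y \<in> Fq")
    case True
    with t traceless_uminus traceless_not_Fq show ?thesis
      using f_eq_fixed_point_Fq by (auto simp: c_def)
  next
    case False
    hence "f y = c \<longleftrightarrow> y \<in> traceless \<and> (a - 1) * y ^ 2 = (a - 1) * \<beta>"
      using f_eq_Fq_iff[OF c] \<beta>(2) by auto
    also have "\<dots> \<longleftrightarrow> y \<in> {t, - t}"
      using t traceless_uminus a_minus_one_nonzero by auto
    finally show ?thesis
      using False c by auto
  qed
  with t(1) that show thesis
    by (simp add: c_def)
qed

lemma fg_component_fixed_point_not_four_dvd:
  assumes "\<not> 4 dvd q - 1"
  shows "\<exists>S. fg_component f (1 / (a + 1)) = insert (1 / (a + 1)) S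
          \<and> 1 / (a + 1) \<notin> S \<and> card S = 3
          \<and> (\<forall>x\<in>S. f x = 1 / (a + 1) \<and> (\<forall>y. f y \<noteq> x))"
proof -
  define c where "c = 1 / (a + 1)"
  obtain t where t: "t \<in> traceless" and preimage: "\<And>y. f y = c \<longleftrightarrow> y \<in> {c, - c, t, - t}"
    using fixed_point_preimages[OF assms] unfolding c_def by blast
  have c: "c \<in> Fq" "c \<noteq> 0"
    using fixed_point_Fq a_plus_one_nonzero by (auto simp: c_def)
  have no_preimage: "f y \<noteq> x" if "x \<in> {- c, t, - t}" for x y
    using that f_neq_minus_fixed_point[OF assms] f_neq_traceless t traceless_uminus
    by (auto simp: c_def)
  define S where "S = {- c, t, - t}"
  have "fg_component f c = insert c S"
  proof (rule fg_component_eqI)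
    show "f -` insert c S \<subseteq> insert c S"
      using preimage no_preimage by (auto simp: S_def)
  qed (use preimage in \<open>auto simp: S_def intro: exI[of _ 1]\<close>)
  moreover have "t \<noteq> - t" "c \<noteq> - c"
    using t c(2) by (intro neq_uminus; simp add: traceless_def)+
  moreover have "x \<notin> {t, - t}" if "x \<in> Fq" for x
    using that t traceless_uminus traceless_not_Fq by blast
  hence "c \<notin> {t, - t}" "- c \<notin> {t, - t}"
    using c(1) Fq_uminus[OF c(1)] by blast+
  moreover have "\<forall>x\<in>S. f x = c \<and> (\<forall>y. f y \<noteq> x)"
    using preimage no_preimage by (auto simp: S_def)
  ultimately show ?thesis
    by (intro exI[of _ S]) (auto simp: S_def c_def)
qed

lemma fixed_point_scaling_factor:
  assumes "4 dvd q - 1"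
  obtains d where "d \<in> Fq" "d \<noteq> 0" "(a - 1) * d ^ 2 = 1 / (a + 1)"
proof -
  obtain i where i: "i \<in> Fq" "i ^ 2 = -1"
    using assms minus_one_square_Fq_iff by blast
  obtain b where b: "b \<in> Fq" "b \<noteq> 0" "b ^ 2 = 1 - a ^ 2"
    by (rule sqrt_one_minus_a2)
  define d where "d = 1 / (i * b)"
  have "(i * b) ^ 2 = (a - 1) * (a + 1)"
    using i(2) b(3) by (simp add: power_mult_distrib algebra_simps power2_eq_square)
  hence "(a - 1) * d ^ 2 = (a - 1) / ((a - 1) * (a + 1))"
    by (simp add: d_def power_one_over)
  also have "\<dots> = 1 / (a + 1)"
    using a_minus_one_nonzero by simp
  finally have "(a - 1) * d ^ 2 = 1 / (a + 1)" .
  moreover have "d \<in> Fq" "d \<noteq> 0"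
    using i b by (auto simp: d_def intro!: Fq_divide Fq_mult)
  ultimately show thesis
    using that by blast
qed

context
  fixes s r :: nat and \<zeta> d :: 'a
  assumes q_minus_one: "q - 1 = 2 ^ s * r" and odd_r: "odd r"
    and \<zeta>: "\<zeta> ^ 2 ^ Suc s = 1" "\<zeta> ^ 2 ^ s = -1"
    and d: "d \<in> Fq" "d \<noteq> 0" "(a - 1) * d ^ 2 = 1 / (a + 1)"
begin

text \<open>The component of \<open>1 / (a + 1)\<close> is the image of the \<open>2 ^ Suc s\<close>-th roots of unity under
  \<open>vertex\<close>, which turns squaring into \<open>f\<close>; the roots outside \<open>F\<^sub>q\<close> are traceless.\<close>
definition vertex :: "'a \<Rightarrow> 'a" where
  "vertex y = (if y \<in> Fq then y / (a + 1) else d * y)"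

lemma two_power_root_cases:
  assumes "y ^ 2 ^ Suc s = 1"
  shows "y \<in> Fq \<and> y ^ 2 ^ s = 1 \<or> y \<in> traceless \<and> y ^ 2 ^ s = -1"
proof -
  have "(y ^ 2 ^ s) ^ 2 = 1"
    using assms by (simp only: power_Suc2 power_mult[of y "2 ^ s" 2])
  hence "y ^ 2 ^ s = 1 \<or> y ^ 2 ^ s = -1"
    by (simp add: power2_eq_1_iff)
  moreover have "y \<noteq> 0"
    using assms by (auto simp: zero_power)
  ultimately show ?thesis
    using frob_two_power_root[OF q_minus_one odd_r assms] by (auto simp: mem_Fq traceless_def)
qed

lemma f_vertex:
  assumes "y ^ 2 ^ Suc s = 1"
  shows "f (vertex y) = vertex (y ^ 2)"
proof -
  have "y ^ 2 \<in> Fq"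
    using two_power_root_cases[OF assms] square_traceless by (auto simp: traceless_def)
  hence "vertex (y ^ 2) = y ^ 2 / (a + 1)"
    by (simp add: vertex_def)
  moreover have "f (vertex y) = y ^ 2 / (a + 1)"
    using two_power_root_cases[OF assms]
  proof
    assume "y \<in> Fq \<and> y ^ 2 ^ s = 1"
    hence "y / (a + 1) \<in> Fq" "vertex y = y / (a + 1)"
      using a_Fq by (auto simp: vertex_def intro!: Fq_divide Fq_add)
    thus ?thesis
      using a_plus_one_nonzero by (simp add: f_Fq power_divide power2_eq_square)
  next
    assume "y \<in> traceless \<and> y ^ 2 ^ s = -1"
    hence "d * y \<in> traceless" "vertex y = d * y"
      using d traceless_not_Fq by (auto simp: vertex_def intro: traceless_mult_Fq)
    thus ?thesis
      using d(3) by (simp add: f_antifixed traceless_def power_mult_distrib mult.assoc[symmetric])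
  qed
  ultimately show ?thesis
    by simp
qed

lemma inj_vertex: "inj vertex"
proof
  fix y z
  assume eq: "vertex y = vertex z"
  have mixed: False if "y \<in> Fq" "z \<notin> Fq" "y / (a + 1) = d * z" for y z
  proof -
    have "z = y / (a + 1) / d"
      using that(3) d(2) by (simp add: field_simps)
    moreover have "y / (a + 1) / d \<in> Fq"
      using that(1) a_Fq d(1) by (intro Fq_divide Fq_add) simp_all
    ultimately show False
      using that(2) by simp
  qed
  show "y = z"
    using eq mixed[of y z] mixed[of z y] a_plus_one_nonzero d(2)
    by (auto simp: vertex_def split: if_splits)
qed

lemma funpow_f_vertex:
  assumes "y ^ 2 ^ Suc s = 1"
  shows "(f ^^ k) (vertex y) = vertex (y ^ 2 ^ k)"
proof (induction k)
  case (Suc k)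
  have "(y ^ 2 ^ k) ^ 2 ^ Suc s = (y ^ 2 ^ Suc s) ^ 2 ^ k"
    by (simp only: power_mult[symmetric] mult.commute)
  hence "f (vertex (y ^ 2 ^ k)) = vertex ((y ^ 2 ^ k) ^ 2)"
    using assms by (intro f_vertex) simp
  also have "(y ^ 2 ^ k) ^ 2 = y ^ 2 ^ Suc k"
    by (simp only: power_Suc2 power_mult)
  finally show ?case
    using Suc by simp
qed simp

lemma two_power_root_power:
  assumes "(y::'a) ^ 2 ^ Suc s = 1"
  shows "(y ^ k) ^ 2 ^ Suc s = 1"
proof -
  have "(y ^ k) ^ 2 ^ Suc s = (y ^ 2 ^ Suc s) ^ k"
    by (simp only: power_mult[symmetric] mult.commute)
  with assms show ?thesis
    by simp
qed

lemma root_Fq_if_f_eq_vertex: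
  assumes "y ^ 2 ^ Suc s = 1" "f z = vertex y"
  shows "y \<in> Fq" "y ^ 2 ^ s = 1"
proof -
  have "vertex y \<notin> traceless"
    using assms(2) f_neq_traceless by metis
  moreover have "d * y \<in> traceless" if "y \<in> traceless"
    using that d by (intro traceless_mult_Fq)
  ultimately show "y \<in> Fq" "y ^ 2 ^ s = 1"
    using two_power_root_cases[OF assms(1)] traceless_not_Fq by (auto simp: vertex_def)
qed

lemma f_eq_vertex_Fq:
  assumes "y \<in> Fq" "y \<noteq> 0" "f z = y / (a + 1)"
  obtains w where "w ^ 2 = y" "z = vertex w"
proof -
  have "y / (a + 1) \<in> Fq" "y / (a + 1) \<noteq> 0"
    using assms a_Fq a_plus_one_nonzero by (auto intro!: Fq_divide Fq_add)
  with assms(3) consider "z \<in> Fq" "(a + 1) * z ^ 2 = y / (a + 1)"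
    | "z \<in> traceless" "(a - 1) * z ^ 2 = y / (a + 1)"
    using f_eq_Fq_iff by blast
  thus thesis
  proof cases
    case 1
    define w where "w = (a + 1) * z"
    have "w ^ 2 = (a + 1) * ((a + 1) * z ^ 2)"
      by (simp add: w_def power2_eq_square algebra_simps)
    hence "w ^ 2 = y"
      using 1(2) a_plus_one_nonzero by simp
    moreover have "z = vertex w"
      using 1(1) a_Fq a_plus_one_nonzero by (auto simp: vertex_def w_def intro!: Fq_mult Fq_add)
    ultimately show thesis
      by (rule that)
  next
    case 2
    define w where "w = 1 / d * z"
    have "(a - 1) * z ^ 2 = (a - 1) * (d ^ 2 * y)"
      using 2(2) d(3) by (simp add: mult.assoc[symmetric] mult.commute[of "a - 1"])
    hence "w ^ 2 = y"
      using a_minus_one_nonzero d(2) by (simp add: w_def power_divide)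
    moreover have "1 / d \<in> Fq" "1 / d \<noteq> 0"
      using d(1,2) by (auto intro: Fq_divide)
    with 2(1) have "w \<in> traceless"
      unfolding w_def by (intro traceless_mult_Fq)
    hence "z = vertex w"
      using traceless_not_Fq d(2) by (auto simp: vertex_def w_def)
    ultimately show thesis
      by (rule that)
  qed
qed

lemma fg_component_fixed_point_eq: "fg_component f (1 / (a + 1)) = vertex ` {y. y ^ 2 ^ Suc s = 1}"
proof (rule fg_component_eqI)
  have "vertex 1 = 1 / (a + 1)"
    by (simp add: vertex_def)
  thus "1 / (a + 1) \<in> vertex ` {y. y ^ 2 ^ Suc s = 1}"
    by (intro image_eqI[of _ _ 1]) simp_all
  show "f ` vertex ` {y. y ^ 2 ^ Suc s = 1} \<subseteq> vertex ` {y. y ^ 2 ^ Suc s = 1}"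
    using f_vertex two_power_root_power by auto
  show "f -` vertex ` {y. y ^ 2 ^ Suc s = 1} \<subseteq> vertex ` {y. y ^ 2 ^ Suc s = 1}"
  proof
    fix z
    assume "z \<in> f -` vertex ` {y. y ^ 2 ^ Suc s = 1}"
    then obtain y where y: "y ^ 2 ^ Suc s = 1" "f z = vertex y"
      by blast
    hence "y \<in> Fq" "y ^ 2 ^ s = 1"
      by (rule root_Fq_if_f_eq_vertex)+
    moreover from this y have "y \<noteq> 0" "f z = y / (a + 1)"
      by (auto simp: vertex_def zero_power)
    ultimately obtain w where "w ^ 2 = y" "z = vertex w"
      using f_eq_vertex_Fq by blast
    moreover from this have "w ^ 2 ^ Suc s = 1"
      using \<open>y ^ 2 ^ s = 1\<close> by (simp only: power_Suc power_mult)
    ultimately show "z \<in> vertex ` {y. y ^ 2 ^ Suc s = 1}"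
      by blast
  qed
  fix x
  assume "x \<in> vertex ` {y. y ^ 2 ^ Suc s = 1}"
  then obtain y where "y ^ 2 ^ Suc s = 1" "x = vertex y"
    by blast
  hence "(f ^^ Suc s) x = vertex (y ^ 2 ^ Suc s)"
    using funpow_f_vertex by blast
  also have "\<dots> = 1 / (a + 1)"
    using \<open>vertex 1 = _\<close> \<open>y ^ 2 ^ Suc s = 1\<close> by simp
  finally show "\<exists>k. (f ^^ k) x = 1 / (a + 1)"
    by blast
qed

lemma fg_iso_fixed_point: "fg_iso f (fg_component f (1 / (a + 1))) cyc_tree_map (cyc_tree_verts (Suc s))"
proof (rule fg_isoI)
  have "bij_betw (\<lambda>e. \<zeta> ^ e) {..<2 ^ Suc s} {y. y ^ 2 ^ Suc s = 1}"
    using \<zeta> minus_one_neq_one by (rule bij_betw_power_two_power_root)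
  moreover have "bij_betw vertex {y. y ^ 2 ^ Suc s = 1} (fg_component f (1 / (a + 1)))"
    unfolding fg_component_fixed_point_eq bij_betw_def using inj_on_subset[OF inj_vertex] by blast
  ultimately have "bij_betw (vertex \<circ> ((\<lambda>e. \<zeta> ^ e) \<circ> tree_index (Suc s))) (cyc_tree_verts (Suc s))
      (fg_component f (1 / (a + 1)))"
    using bij_betw_tree_index by (blast intro: bij_betw_trans)
  thus "bij_betw (\<lambda>v. vertex (\<zeta> ^ tree_index (Suc s) v)) (cyc_tree_verts (Suc s))
      (fg_component f (1 / (a + 1)))"
    by (simp add: comp_def)
  show "cyc_tree_map ` cyc_tree_verts (Suc s) \<subseteq> cyc_tree_verts (Suc s)"
    by (rule cyc_tree_map_closed)
  fix v
  assume "v \<in> cyc_tree_verts (Suc s)"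
  hence "\<zeta> ^ tree_index (Suc s) (cyc_tree_map v) = \<zeta> ^ (2 * tree_index (Suc s) v mod 2 ^ Suc s)"
    by (simp only: tree_index_cyc_tree_map)
  also have "\<dots> = \<zeta> ^ (2 * tree_index (Suc s) v)"
    using \<zeta>(1) by (rule power_mod_eq)
  also have "\<dots> = (\<zeta> ^ tree_index (Suc s) v) ^ 2"
    by (simp only: power_mult[symmetric] mult.commute)
  finally have "\<zeta> ^ tree_index (Suc s) (cyc_tree_map v) = (\<zeta> ^ tree_index (Suc s) v) ^ 2" .
  thus "vertex (\<zeta> ^ tree_index (Suc s) (cyc_tree_map v)) = f (vertex (\<zeta> ^ tree_index (Suc s) v))"
    using f_vertex two_power_root_power[OF \<zeta>(1)] by simp
qed

end

lemma fg_iso_fixed_point_two_le: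
  assumes "q - 1 = 2 ^ s * r" "odd r" "2 \<le> s"
  shows "fg_iso f (fg_component f (1 / (a + 1))) cyc_tree_map (cyc_tree_verts (s + 1))"
proof -
  obtain \<zeta> :: 'a where \<zeta>: "\<zeta> ^ 2 ^ Suc s = 1" "\<zeta> ^ 2 ^ s = -1"
    using assms(1) by (rule primitive_two_power_root_exists)
  have "(2::nat) ^ 2 dvd 2 ^ s"
    using assms(3) by (rule le_imp_power_dvd)
  hence "4 dvd q - 1"
    using assms(1) by (simp add: dvd_mult2)
  then obtain d where "d \<in> Fq" "d \<noteq> 0" "(a - 1) * d ^ 2 = 1 / (a + 1)"
    by (rule fixed_point_scaling_factor)
  with assms \<zeta> show ?thesis
    using fg_iso_fixed_point by simp
qed

end

theorem theorem22:
  fixes p n q s r :: nat and a :: "'a::{field,finite}" and f :: "'a \<Rightarrow> 'a"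
    and Fq :: "'a set" and C :: "'a set"
  assumes "prime p" and "odd p" and "n \<ge> 1" and "q = p ^ n"
    and "card (UNIV :: 'a set) = q ^ 2"
    and "Fq = {x. x ^ q = x}"
    and "q - 1 = 2 ^ s * r" and "odd r"
    and "a \<in> Fq" and "a \<noteq> 0" and "a \<noteq> 1" and "a \<noteq> -1"
    and "f = (\<lambda>x. x ^ (q + 1) + a * x ^ 2)"
    and "chi2 Fq (1 - a ^ 2) = 1"
    and "C = (\<Union>\<alpha>\<in>Fq. fg_component f \<alpha>)"
  shows "f ` Fq \<subseteq> Fq \<and> (\<forall>x\<in>Fq. f x = (a + 1) * x ^ 2)
    \<and> (\<forall>x\<in>C - Fq. f x \<in> Fq \<and> chi2 Fq (f x * (a - 1)) = -1 \<and> (\<forall>y. f y \<noteq> x))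
    \<and> (\<forall>\<alpha>\<in>Fq. card {x\<in>C - Fq. f x = \<alpha>} = (if chi2 Fq (\<alpha> * (a - 1)) = -1 then 2 else 0))
    \<and> f 0 = 0 \<and> fg_component f 0 = {0}
    \<and> f (1 / (a + 1)) = 1 / (a + 1)
    \<and> (s = 1 \<longrightarrow> (\<exists>S. fg_component f (1 / (a + 1)) = insert (1 / (a + 1)) S
          \<and> 1 / (a + 1) \<notin> S \<and> card S = 3
          \<and> (\<forall>x\<in>S. f x = 1 / (a + 1) \<and> (\<forall>y. f y \<noteq> x))))
    \<and> (s \<ge> 2 \<longrightarrow> fg_iso f (fg_component f (1 / (a + 1))) cyc_tree_map (cyc_tree_verts (s + 1)))"
proof -
  interpret norm_plus_square p n q Fq a f
    by unfold_locales (fact assms)+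
  have C: "C - Fq = traceless"
    using assms(15) union_fg_components_Fq traceless_not_Fq by blast
  show ?thesis
  proof (intro conjI impI)
    show "f ` Fq \<subseteq> Fq"
      using f_in_Fq by blast
    show "\<forall>x\<in>Fq. f x = (a + 1) * x ^ 2"
      using f_Fq by blast
    show "\<forall>x\<in>C - Fq. f x \<in> Fq \<and> chi2 Fq (f x * (a - 1)) = -1 \<and> (\<forall>y. f y \<noteq> x)"
      using f_in_Fq chi2_f_traceless f_neq_traceless by (simp add: C)
    show "\<forall>\<alpha>\<in>Fq. card {x\<in>C - Fq. f x = \<alpha>} = (if chi2 Fq (\<alpha> * (a - 1)) = -1 then 2 else 0)"
      using card_traceless_f_preimage by (simp add: C)
    show "f 0 = 0" "fg_component f 0 = {0}" "f (1 / (a + 1)) = 1 / (a + 1)"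
      using f_eq_zero_iff fg_component_zero f_fixed_point by simp_all
  next
    assume "s = 1"
    hence "\<not> 4 dvd q - 1"
      using assms(7,8) by simp
    thus "\<exists>S. fg_component f (1 / (a + 1)) = insert (1 / (a + 1)) S \<and> 1 / (a + 1) \<notin> S
        \<and> card S = 3 \<and> (\<forall>x\<in>S. f x = 1 / (a + 1) \<and> (\<forall>y. f y \<noteq> x))"
      by (rule fg_component_fixed_point_not_four_dvd)
  next
    assume "s \<ge> 2"
    with assms(7,8) show "fg_iso f (fg_component f (1 / (a + 1))) cyc_tree_map (cyc_tree_verts (s + 1))"
      by (rule fg_iso_fixed_point_two_le)
  qed
qed

end
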